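(* Let $G$ be a locally compact Abelian group and $(G, \mathbb{R}^d \times H_1, \mathcal{L})$ a cut and project scheme. Let $\phi \in \mathcal{S}(\mathbb{R}^d)$, $\psi \in C_c(H_1)$ and $h=\phi \otimes \psi$. Then the measure $\omega_h=\sum_{(x,x^\star)\in\mathcal L}h(x^\star)\delta_x$ is norm almost periodic.
   Context: Cut and project scheme $(G,H,\mathcal L)$: $\mathcal L\subseteq G\times H$ a lattice with $\pi_H(\mathcal L)$ dense and $\pi_G|_{\mathcal L}$ injective; $\mathcal L=\{(x,x^\star):x\in\pi_G(\mathcal L)\}$. $\mathcal S(\mathbb R^d)$ is the Schwartz space; $(\phi\otimes\psi)(x,y)=\phi(x)\psi(y)$. $\|\mu\|_K=\sup_t|\mu|(t+K)$; $T_t\mu$ is the translate of $\mu$ by $t$. A measure $\mu$ is norm almost periodic if for each $\epsilon>0$ the set $\{t\in G:\|T_t\mu-\mu\|_K<\epsilon\}$ is relatively dense (i.e. $P+C=G$ for some compact $C$), for a fixed compact $K$ with non-empty interior (independent of the choice of $K$). *)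

theory Defs
  imports "HOL-Analysis.Analysis"
begin

text \<open>The group H is given as a type that
  only needs a topology and an addition; for the product type of the theorem
  these are the product topology and the componentwise addition.\<close>
definition cut_and_project ::
  "('g::topological_ab_group_add \<times> 'k::{topological_space, ab_group_add}) set \<Rightarrow> bool" where
  "cut_and_project L \<longleftrightarrow>
     0 \<in> L \<and> (\<forall>x\<in>L. \<forall>y\<in>L. x - y \<in> L) \<and>
     (\<exists>U. open U \<and> (0::'g\<times>'k) \<in> U \<and> L \<inter> U = {0}) \<and>
     (\<exists>C. compact C \<and> (\<Union>l\<in>L. (\<lambda>c. l + c) ` C) = UNIV) \<and>
     closure (snd ` L) = UNIV \<and>
     inj_on fst L"

definition star_map :: "('g \<times> 'k) set \<Rightarrow> 'g \<Rightarrow> 'k" where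
  "star_map L x = (THE y. (x, y) \<in> L)"

fun iter_deriv :: "'e::euclidean_space list \<Rightarrow> ('e \<Rightarrow> complex) \<Rightarrow> 'e \<Rightarrow> complex" where
  "iter_deriv [] f = f"
| "iter_deriv (v # vs) f = (\<lambda>x. frechet_derivative (iter_deriv vs f) (at x) v)"

definition schwartz :: "('e::euclidean_space \<Rightarrow> complex) \<Rightarrow> bool" where
  "schwartz f \<longleftrightarrow>
     (\<forall>vs. set vs \<subseteq> Basis \<longrightarrow> (\<forall>x. iter_deriv vs f differentiable (at x))) \<and>
     (\<forall>vs (n::nat). set vs \<subseteq> Basis \<longrightarrow>
        bounded (range (\<lambda>x. (1 + norm x) ^ n * norm (iter_deriv vs f x))))"

definition Cc :: "('h::topological_space \<Rightarrow> complex) \<Rightarrow> bool" where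
  "Cc f \<longleftrightarrow> continuous_on UNIV f \<and> compact (closure {x. f x \<noteq> 0})"

text \<open>A pure point measure sum_x c(x) delta_x on G is represented by its
  coefficient function c. Its total variation measure is |mu|(A) = sum_{x in A} |c x|.\<close>
definition pp_variation :: "('g \<Rightarrow> complex) \<Rightarrow> 'g set \<Rightarrow> ennreal" where
  "pp_variation c A = (\<Sum>\<^sub>\<infinity>x\<in>A. ennreal (norm (c x)))"

definition pp_Knorm :: "'g::ab_group_add set \<Rightarrow> ('g \<Rightarrow> complex) \<Rightarrow> ennreal" where
  "pp_Knorm K c = (SUP t. pp_variation c ((\<lambda>k. t + k) ` K))"

text \<open>Translate T_t of sum c(x) delta_x is sum c(x) delta_{x+t}.\<close>
definition pp_translate :: "'g::ab_group_add \<Rightarrow> ('g \<Rightarrow> complex) \<Rightarrow> 'g \<Rightarrow> complex" where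
  "pp_translate t c = (\<lambda>y. c (y - t))"

definition relatively_dense :: "'g::{topological_space, ab_group_add} set \<Rightarrow> bool" where
  "relatively_dense P \<longleftrightarrow> (\<exists>C. compact C \<and> (\<Union>p\<in>P. (\<lambda>c. p + c) ` C) = UNIV)"

text \<open>Norm almost periodicity (the notion is independent of the compact K with
  non-empty interior; we require it for every such K).\<close>
definition norm_almost_periodic :: "('g::{topological_space, ab_group_add} \<Rightarrow> complex) \<Rightarrow> bool" where
  "norm_almost_periodic c \<longleftrightarrow>
     (\<forall>K. compact K \<and> interior K \<noteq> {} \<longrightarrow>
        (\<forall>\<epsilon>>0. relatively_dense
           {t. pp_Knorm K (\<lambda>y. pp_translate t c y - c y) < ennreal \<epsilon>}))"

definition omega :: "('g \<times> 'k) set \<Rightarrow> ('k \<Rightarrow> complex) \<Rightarrow> 'g \<Rightarrow> complex" where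
  "omega L h = (\<lambda>x. if x \<in> fst ` L then h (star_map L x) else 0)"

end

theory Submission
  imports Defs
begin

text \<open>Almost periods of omega_h come from lattice points (t, t*) with t* close to 0: translating
  by t turns omega_h into the comb with weight h(. - t*) - h. Uniform continuity of \<psi> and a
  weighted uniform continuity of the Schwartz function \<phi> bound this weight by
  \<epsilon> (1 + |y|)^-N, and it vanishes outside R^d \<times> S for a fixed compact S. Uniform discreteness
  of L bounds the number of lattice points over each unit ball in every window s + K, so a
  dyadic decomposition of R^d bounds the K-norm of such a comb by a constant times \<epsilon>.
  The t whose t* lies in a small open window form a model set, which is relatively dense.\<close>

section \<open>Topological groups\<close>

instance prod :: (topological_monoid_add, topological_monoid_add) topological_monoid_add
proof
  fix a b :: "'a \<times> 'b"
  have "(fst \<longlongrightarrow> a) (nhds a \<times>\<^sub>F nhds b)" "(snd \<longlongrightarrow> b) (nhds a \<times>\<^sub>F nhds b)"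
    by (simp_all add: filterlim_fst filterlim_snd)
  then have "LIM x (nhds a \<times>\<^sub>F nhds b).
      (fst (fst x) + fst (snd x), snd (fst x) + snd (snd x)) :> nhds (a + b)"
    unfolding plus_prod_def by (auto intro!: tendsto_intros simp: case_prod_beta)
  then show "LIM x (nhds a \<times>\<^sub>F nhds b). fst x + snd x :> nhds (a + b)"
    by (simp add: plus_prod_def case_prod_beta)
qed

instance prod :: (topological_group_add, topological_group_add) topological_group_add
proof
  fix a :: "'a \<times> 'b"
  have "((\<lambda>x. (- fst x, - snd x)) \<longlongrightarrow> (- fst a, - snd a)) (nhds a)"
    by (auto intro!: tendsto_intros filterlim_ident)
  moreover have "(\<lambda>x. (- fst x, - snd x)) = uminus" "(- fst a, - snd a) = - a"
    by (simp_all add: fun_eq_iff prod_eq_iff)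
  ultimately show "(uminus \<longlongrightarrow> - a) (nhds a)"
    by metis
qed

instance prod :: (topological_ab_group_add, topological_ab_group_add) topological_ab_group_add ..

lemma open_translation_group:
  fixes S :: "'a::topological_ab_group_add set"
  assumes "open S"
  shows "open ((+) a ` S)"
proof -
  have "(+) a ` S = (\<lambda>x. x - a) -` S"
    by (force simp: algebra_simps)
  moreover have "continuous_on UNIV (\<lambda>x::'a. x - a)"
    by (intro continuous_intros)
  ultimately show ?thesis
    using assms by (simp add: open_vimage)
qed

lemma compact_sums_group:
  fixes A B :: "'a::topological_monoid_add set"
  assumes "compact A" "compact B"
  shows "compact {x + y | x y. x \<in> A \<and> y \<in> B}"
proof -
  have "{x + y | x y. x \<in> A \<and> y \<in> B} = (\<lambda>p. fst p + snd p) ` (A \<times> B)"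
    by force
  moreover have "continuous_on (A \<times> B) (\<lambda>p::'a \<times> 'a. fst p + snd p)"
    by (intro continuous_intros)
  ultimately show ?thesis
    using compact_continuous_image compact_Times assms by metis
qed

lemma zero_nhds_diff_subset:
  fixes U :: "'a::topological_group_add set"
  assumes "open U" "0 \<in> U"
  obtains V where "open V" "0 \<in> V" "\<And>v w. v \<in> V \<Longrightarrow> w \<in> V \<Longrightarrow> v - w \<in> U"
proof -
  have "open ((\<lambda>p::'a \<times> 'a. fst p - snd p) -` U)"
    using assms(1) by (intro open_vimage continuous_intros)
  moreover have "(0, 0) \<in> (\<lambda>p::'a \<times> 'a. fst p - snd p) -` U"
    using assms(2) by simp
  ultimately obtain A B where
    "open A" "open B" "(0, 0) \<in> A \<times> B" "A \<times> B \<subseteq> (\<lambda>p. fst p - snd p) -` U"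
    by (rule open_prod_elim)
  then show ?thesis
    by (intro that[of "A \<inter> B"]) auto
qed

lemma lattice_translate_subsingleton:
  fixes L :: "'a::ab_group_add set"
  assumes diff: "\<And>x y. x \<in> L \<Longrightarrow> y \<in> L \<Longrightarrow> x - y \<in> L" and "L \<inter> U = {0}"
    and V: "\<And>v w. v \<in> V \<Longrightarrow> w \<in> V \<Longrightarrow> v - w \<in> U"
    and "l \<in> L" "l' \<in> L" "l - p \<in> V" "l' - p \<in> V"
  shows "l = l'"
proof -
  have "(l - p) - (l' - p) \<in> U"
    using assms(6,7) by (rule V)
  then have "l - l' \<in> L \<inter> U"
    using diff[OF assms(4,5)] by simp
  then show ?thesis
    using assms(2) by simp
qed

lemma card_le_of_cover_subsingletons:
  assumes "finite Q" "A \<subseteq> (\<Union>q\<in>Q. B q)"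
    and single: "\<And>q a a'. q \<in> Q \<Longrightarrow> a \<in> A \<Longrightarrow> a' \<in> A \<Longrightarrow> a \<in> B q \<Longrightarrow> a' \<in> B q \<Longrightarrow> a = a'"
  shows "finite A" "card A \<le> card Q"
proof -
  obtain g where g: "\<And>a. a \<in> A \<Longrightarrow> g a \<in> Q \<and> a \<in> B (g a)"
    using assms(2) by (metis UN_iff subsetD)
  have inj: "inj_on g A"
    by (rule inj_onI) (use g single in metis)
  have im: "g ` A \<subseteq> Q"
    using g by auto
  show "finite A"
    using finite_subset[OF im assms(1)] inj by (rule finite_imageD)
  show "card A \<le> card Q"
    using inj im assms(1) by (rule card_inj_on_le)
qed

lemma uniformly_discrete_card_bounded:
  fixes L :: "'a::topological_ab_group_add set"
  assumes diff: "\<And>x y. x \<in> L \<Longrightarrow> y \<in> L \<Longrightarrow> x - y \<in> L"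
    and U: "open U" "0 \<in> U" "L \<inter> U = {0}"
    and "compact Q"
  obtains M where "\<And>x. finite (L \<inter> (+) x ` Q)" "\<And>x. card (L \<inter> (+) x ` Q) \<le> M"
proof -
  obtain V where V: "open V" "0 \<in> V" "\<And>v w. v \<in> V \<Longrightarrow> w \<in> V \<Longrightarrow> v - w \<in> U"
    using zero_nhds_diff_subset[OF U(1,2)] by blast
  have "Q \<subseteq> (\<Union>q\<in>Q. (+) q ` V)"
    using V(2) by force
  then obtain Qf where Qf: "Qf \<subseteq> Q" "finite Qf" "Q \<subseteq> (\<Union>q\<in>Qf. (+) q ` V)"
    by (rule compactE_image[OF \<open>compact Q\<close> open_translation_group[OF V(1)]])
  have cover: "L \<inter> (+) x ` Q \<subseteq> (\<Union>q\<in>Qf. (+) (x + q) ` V)" for x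
    using Qf(3) by (force simp: add.assoc)
  have single: "l = l'" if "l \<in> L \<inter> (+) x ` Q" "l' \<in> L \<inter> (+) x ` Q"
    "l \<in> (+) (x + q) ` V" "l' \<in> (+) (x + q) ` V" for x q l l'
    using that by (intro lattice_translate_subsingleton[OF diff U(3) V(3), where p = "x + q"]) auto
  show ?thesis
    using card_le_of_cover_subsingletons[OF Qf(2) cover single] by (rule that)
qed

lemma continuous_translate_uniform_on_compact:
  fixes f :: "'a::topological_ab_group_add \<Rightarrow> 'b::metric_space"
  assumes f: "continuous_on UNIV f" and "compact T" "\<eta> > 0"
  obtains V where "open V" "0 \<in> V" "\<And>y c. y \<in> T \<Longrightarrow> c \<in> V \<Longrightarrow> dist (f (y - c)) (f y) < \<eta>"
proof -
  define Nb where "Nb z = {w. dist (f (z + w)) (f z) < \<eta> / 2}" for z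
  have "open (Nb z)" for z
    unfolding Nb_def
    by (intro open_Collect_less continuous_intros continuous_on_compose2[OF f]) auto
  moreover have "0 \<in> Nb z" for z
    using \<open>\<eta> > 0\<close> by (simp add: Nb_def)
  ultimately have "\<exists>V. open V \<and> 0 \<in> V \<and> (\<forall>v\<in>V. \<forall>w\<in>V. v - w \<in> Nb z)" for z
    by (metis zero_nhds_diff_subset)
  then obtain V where V: "\<And>z. open (V z)" "\<And>z. 0 \<in> V z"
    "\<And>z v w. v \<in> V z \<Longrightarrow> w \<in> V z \<Longrightarrow> v - w \<in> Nb z"
    by metis
  have "T \<subseteq> (\<Union>z\<in>T. (+) z ` V z)"
    using V(2) by force
  then obtain Tf where Tf: "Tf \<subseteq> T" "finite Tf" "T \<subseteq> (\<Union>z\<in>Tf. (+) z ` V z)"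
    by (rule compactE_image[OF \<open>compact T\<close> open_translation_group[OF V(1)]])
  show ?thesis
  proof (rule that[of "\<Inter>z\<in>Tf. V z"])
    show "open (\<Inter>z\<in>Tf. V z)" "0 \<in> (\<Inter>z\<in>Tf. V z)"
      using Tf(2) V(1,2) by auto
    fix y c assume y: "y \<in> T" and c: "c \<in> (\<Inter>z\<in>Tf. V z)"
    obtain z v where z: "z \<in> Tf" "v \<in> V z" "y = z + v"
      using Tf(3) y by auto
    have "c \<in> V z"
      using c z(1) by simp
    \<comment> \<open>both y - c = z + (v - c) and y = z + (v - 0) are within \<eta>/2 of the value at z\<close>
    have "v - c \<in> Nb z" "v - 0 \<in> Nb z"
      using V(3)[OF z(2) \<open>c \<in> V z\<close>] V(3)[OF z(2) V(2)] .
    then have "dist (f (y - c)) (f z) < \<eta> / 2" "dist (f y) (f z) < \<eta> / 2"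
      using z(3) by (simp_all add: Nb_def algebra_simps)
    then show "dist (f (y - c)) (f y) < \<eta>"
      by (rule dist_triangle_half_l)
  qed
qed

lemma locally_compact_UNIV_nhd:
  fixes x :: "'a::topological_space"
  assumes "locally compact (UNIV :: 'a set)"
  obtains U V where "open U" "compact V" "x \<in> U" "U \<subseteq> V"
proof -
  have "openin (top_of_set UNIV) UNIV \<and> x \<in> UNIV"
    by simp
  then have "\<exists>U V. openin (top_of_set UNIV) U \<and> compact V \<and> x \<in> U \<and> U \<subseteq> V \<and> V \<subseteq> UNIV"
    using assms unfolding locally_def by (elim allE impE)
  then obtain U V where UV: "openin (top_of_set UNIV) U" "compact V" "x \<in> U" "U \<subseteq> V"
    by (elim exE conjE)
  have "open U"
    using UV(1) by (simp only: subtopology_UNIV open_openin)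
  then show ?thesis
    using UV(2-4) by (rule that)
qed

section \<open>Compactly supported and Schwartz functions\<close>

lemma Cc_bounded:
  assumes "Cc \<psi>"
  obtains P where "0 \<le> P" "\<And>z. norm (\<psi> z) \<le> P"
proof -
  define T where "T = closure {x. \<psi> x \<noteq> 0}"
  have "compact (\<psi> ` T)"
    using assms unfolding Cc_def T_def
    by (metis compact_continuous_image continuous_on_subset subset_UNIV)
  then obtain P where P: "\<And>z. z \<in> T \<Longrightarrow> norm (\<psi> z) \<le> P"
    by (meson bounded_iff compact_imp_bounded image_eqI)
  have "\<psi> z = 0" if "z \<notin> T" for z
    using that closure_subset[of "{x. \<psi> x \<noteq> 0}"] by (auto simp: T_def)
  then have "norm (\<psi> z) \<le> max 0 P" for z
    using P[of z] by (cases "z \<in> T") auto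
  then show ?thesis
    using that[of "max 0 P"] by simp
qed

lemma Cc_translate_uniform:
  fixes \<psi> :: "'a::topological_ab_group_add \<Rightarrow> complex"
  assumes "Cc \<psi>" "\<eta> > 0"
  obtains V where "open V" "0 \<in> V" "\<And>b z. b \<in> V \<Longrightarrow> norm (\<psi> (z - b) - \<psi> z) < \<eta>"
proof -
  define T where "T = closure {x. \<psi> x \<noteq> 0}"
  have vanish: "\<psi> z = 0" if "z \<notin> T" for z
    using that closure_subset[of "{x. \<psi> x \<noteq> 0}"] by (auto simp: T_def)
  obtain V where V: "open V" "0 \<in> V" "\<And>y c. y \<in> T \<Longrightarrow> c \<in> V \<Longrightarrow> dist (\<psi> (y - c)) (\<psi> y) < \<eta>"
    using continuous_translate_uniform_on_compact[of \<psi> T \<eta>] assms unfolding Cc_def T_def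
    by blast
  \<comment> \<open>symmetrising V also covers the case where z lies outside T but z - b does not\<close>
  show ?thesis
  proof (rule that[of "V \<inter> uminus -` V"])
    show "open (V \<inter> uminus -` V)"
      using V(1) by (intro open_Int open_vimage continuous_intros)
    show "0 \<in> V \<inter> uminus -` V"
      using V(2) by simp
    fix b z assume b: "b \<in> V \<inter> uminus -` V"
    consider "z \<in> T" | "z - b \<in> T" | "z \<notin> T" "z - b \<notin> T"
      by blast
    then show "norm (\<psi> (z - b) - \<psi> z) < \<eta>"
    proof cases
      case 1
      then show ?thesis
        using V(3)[of z b] b by (simp add: dist_norm)
    next
      case 2
      then show ?thesis
        using V(3)[of "z - b" "- b"] b by (simp add: dist_norm norm_minus_commute)
    next
      case 3
      then show ?thesis
        using vanish \<open>\<eta> > 0\<close> by simp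
    qed
  qed
qed

lemma Cc_translate_support:
  fixes \<psi> :: "'a::topological_ab_group_add \<Rightarrow> complex"
  assumes "Cc \<psi>" "locally compact (UNIV :: 'a set)"
  obtains U S where "open U" "0 \<in> U" "compact S" "\<And>b z. b \<in> U \<Longrightarrow> z \<notin> S \<Longrightarrow> \<psi> (z - b) = 0 \<and> \<psi> z = 0"
proof -
  obtain U V :: "'a set" where UV: "open U" "compact V" "0 \<in> U" "U \<subseteq> V"
    using locally_compact_UNIV_nhd[OF assms(2)] by blast
  define T where "T = closure {x. \<psi> x \<noteq> 0}"
  define S where "S = {x + c | x c. x \<in> T \<and> c \<in> V}"
  have "compact S"
    using assms(1) UV(2) unfolding S_def T_def Cc_def by (intro compact_sums_group) simp_all
  have sum_in: "x + c \<in> S" if "x \<in> T" "c \<in> V" for x c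
    using that unfolding S_def by blast
  have "\<psi> (z - b) = 0 \<and> \<psi> z = 0" if "b \<in> U" "z \<notin> S" for b z
  proof -
    have "z - b \<notin> T" "z \<notin> T"
      using sum_in[of "z - b" b] sum_in[of z 0] that UV(3,4) by auto
    then show ?thesis
      using closure_subset[of "{x. \<psi> x \<noteq> 0}"] by (auto simp: T_def)
  qed
  then show ?thesis
    using UV(1,3) \<open>compact S\<close> that by blast
qed

lemma schwartz_decay:
  assumes "schwartz \<phi>"
  obtains C where "0 \<le> C" "\<And>y. (1 + norm y) ^ n * norm (\<phi> y) \<le> C"
proof -
  have "bounded (range (\<lambda>y. (1 + norm y) ^ n * norm (iter_deriv [] \<phi> y)))"
    using assms unfolding schwartz_def by (metis empty_set empty_subsetI)
  then obtain C where C: "\<And>y. \<bar>(1 + norm y) ^ n * norm (\<phi> y)\<bar> \<le> C"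
    by (auto simp: bounded_iff)
  have "0 \<le> C"
    using C[of 0] abs_ge_zero order_trans by blast
  moreover have "(1 + norm y) ^ n * norm (\<phi> y) \<le> C" for y
    using C[of y] abs_ge_self order_trans by blast
  ultimately show ?thesis
    using that by blast
qed

lemma schwartz_continuous:
  assumes "schwartz \<phi>"
  shows "continuous_on UNIV \<phi>"
proof -
  have "\<And>y. iter_deriv [] \<phi> differentiable (at y)"
    using assms unfolding schwartz_def by (metis empty_set empty_subsetI)
  then show ?thesis
    by (simp add: differentiable_imp_continuous_within continuous_at_imp_continuous_on)
qed

lemma weighted_translate_le:
  fixes \<phi> :: "'a::real_normed_vector \<Rightarrow> 'b::real_normed_vector"
  assumes C: "\<And>y. (1 + norm y) ^ n * norm (\<phi> y) \<le> C" and "norm a \<le> 1"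
  shows "(1 + norm y) ^ n * norm (\<phi> (y - a) - \<phi> y) \<le> (2 ^ n + 1) * C"
proof -
  have "1 + norm y \<le> 2 * (1 + norm (y - a))"
    using norm_triangle_ineq2[of y a] norm_ge_zero[of "y - a"] \<open>norm a \<le> 1\<close> by (smt (verit))
  then have "(1 + norm y) ^ n \<le> 2 ^ n * (1 + norm (y - a)) ^ n"
    by (metis power_mono power_mult_distrib add_nonneg_nonneg norm_ge_zero zero_le_one)
  then have "(1 + norm y) ^ n * norm (\<phi> (y - a)) \<le> 2 ^ n * ((1 + norm (y - a)) ^ n * norm (\<phi> (y - a)))"
    by (metis mult.assoc mult_right_mono norm_ge_zero)
  also have "\<dots> \<le> 2 ^ n * C"
    using C by simp
  finally have "(1 + norm y) ^ n * norm (\<phi> (y - a)) \<le> 2 ^ n * C" .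
  moreover have "(1 + norm y) ^ n * norm (\<phi> (y - a) - \<phi> y) \<le>
      (1 + norm y) ^ n * norm (\<phi> (y - a)) + (1 + norm y) ^ n * norm (\<phi> y)"
    by (metis distrib_left mult_left_mono norm_triangle_ineq4 zero_le_power add_nonneg_nonneg
        norm_ge_zero zero_le_one)
  ultimately show ?thesis
    using C[of y] by (simp add: algebra_simps)
qed

lemma continuous_weighted_translate_on_cball:
  fixes \<phi> :: "'a::{heine_borel, real_normed_vector} \<Rightarrow> 'b::real_normed_vector"
  assumes "continuous_on UNIV \<phi>" "\<eta> > 0" "0 \<le> R"
  obtains d where "d > 0"
    "\<And>a y. norm a < d \<Longrightarrow> norm y \<le> R \<Longrightarrow> (1 + norm y) ^ N * norm (\<phi> (y - a) - \<phi> y) \<le> \<eta>"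
proof -
  have "uniformly_continuous_on (cball 0 (R + 1)) \<phi>"
    using assms(1) by (meson compact_cball compact_uniformly_continuous continuous_on_subset subset_UNIV)
  moreover have "\<eta> / (1 + R) ^ N > 0"
    using assms(2,3) by simp
  ultimately obtain d where "d > 0" and d: "\<And>x x'. x \<in> cball 0 (R + 1) \<Longrightarrow> x' \<in> cball 0 (R + 1) \<Longrightarrow>
      dist x' x < d \<Longrightarrow> dist (\<phi> x') (\<phi> x) < \<eta> / (1 + R) ^ N"
    unfolding uniformly_continuous_on_def by metis
  show ?thesis
  proof (rule that[of "min 1 d"])
    show "min 1 d > 0"
      using \<open>d > 0\<close> by simp
    fix a y :: 'a
    assume a: "norm a < min 1 d" and y: "norm y \<le> R"
    have "norm (\<phi> (y - a) - \<phi> y) \<le> \<eta> / (1 + R) ^ N"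
      using d[of y "y - a"] a y norm_triangle_ineq4[of y a] norm_minus_commute[of a y]
      by (simp add: dist_norm less_imp_le)
    moreover have "(1 + norm y) ^ N \<le> (1 + R) ^ N"
      using y by (simp add: power_mono)
    ultimately have "(1 + norm y) ^ N * norm (\<phi> (y - a) - \<phi> y) \<le> (1 + R) ^ N * (\<eta> / (1 + R) ^ N)"
      using assms(3) by (intro mult_mono) simp_all
    then show "(1 + norm y) ^ N * norm (\<phi> (y - a) - \<phi> y) \<le> \<eta>"
      using assms(3) by simp
  qed
qed

lemma schwartz_translate_uniform:
  fixes \<phi> :: "'e::euclidean_space \<Rightarrow> complex"
  assumes "schwartz \<phi>" "\<eta> > 0"
  obtains \<delta> where "\<delta> > 0" "\<And>a y. norm a < \<delta> \<Longrightarrow> (1 + norm y) ^ N * norm (\<phi> (y - a) - \<phi> y) \<le> \<eta>"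
proof -
  obtain C where "0 \<le> C" and C: "\<And>y. (1 + norm y) ^ Suc N * norm (\<phi> y) \<le> C"
    using schwartz_decay[OF assms(1)] by blast
  define R where "R = (2 ^ Suc N + 1) * C / \<eta>"
  have "0 \<le> R"
    using \<open>0 \<le> C\<close> \<open>\<eta> > 0\<close> by (simp add: R_def)
  \<comment> \<open>far out, one spare power of 1 + norm y absorbs the constant\<close>
  have far: "(1 + norm y) ^ N * norm (\<phi> (y - a) - \<phi> y) \<le> \<eta>" if "norm a \<le> 1" "R \<le> norm y" for a y
  proof -
    have "(1 + norm y) * ((1 + norm y) ^ N * norm (\<phi> (y - a) - \<phi> y)) \<le> \<eta> * R"
      using weighted_translate_le[OF C that(1)] \<open>\<eta> > 0\<close> by (simp add: R_def mult.assoc)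
    also have "\<dots> \<le> (1 + norm y) * \<eta>"
      using that(2) \<open>\<eta> > 0\<close> by simp
    finally show ?thesis
      by (simp add: add_pos_nonneg)
  qed
  obtain d where "d > 0" and near:
    "\<And>a y. norm a < d \<Longrightarrow> norm y \<le> R \<Longrightarrow> (1 + norm y) ^ N * norm (\<phi> (y - a) - \<phi> y) \<le> \<eta>"
    using continuous_weighted_translate_on_cball[OF schwartz_continuous[OF assms(1)] assms(2) \<open>0 \<le> R\<close>]
    by blast
  show ?thesis
  proof (rule that[of "min 1 d"])
    show "min 1 d > 0"
      using \<open>d > 0\<close> by simp
    fix a y :: 'e
    assume "norm a < min 1 d"
    then show "(1 + norm y) ^ N * norm (\<phi> (y - a) - \<phi> y) \<le> \<eta>"
      using far near by (cases "R \<le> norm y") auto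
  qed
qed

lemma weighted_norm_mult_diff_le:
  fixes p p' q q' :: "'a::real_normed_algebra"
  assumes "0 \<le> w" "w * norm (p' - p) \<le> \<eta>\<^sub>1" "norm q' \<le> P" "w * norm p \<le> C" "norm (q' - q) \<le> \<eta>\<^sub>2"
  shows "w * norm (p' * q' - p * q) \<le> \<eta>\<^sub>1 * P + C * \<eta>\<^sub>2"
proof -
  have "norm (p' * q' - p * q) \<le> norm (p' - p) * norm q' + norm p * norm (q' - q)"
    using norm_triangle_ineq[of "(p' - p) * q'" "p * (q' - q)"] norm_mult_ineq[of "p' - p" q']
      norm_mult_ineq[of p "q' - q"]
    by (simp add: algebra_simps)
  then have "w * norm (p' * q' - p * q) \<le> w * (norm (p' - p) * norm q' + norm p * norm (q' - q))"
    using assms(1) by (rule mult_left_mono)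
  also have "\<dots> = (w * norm (p' - p)) * norm q' + (w * norm p) * norm (q' - q)"
    by (simp add: algebra_simps)
  also have "\<dots> \<le> \<eta>\<^sub>1 * P + C * \<eta>\<^sub>2"
  proof (rule add_mono)
    have "0 \<le> \<eta>\<^sub>1"
      using assms(1,2) by (meson mult_nonneg_nonneg norm_ge_zero order_trans)
    then show "(w * norm (p' - p)) * norm q' \<le> \<eta>\<^sub>1 * P"
      using assms(2,3) by (intro mult_mono) simp_all
    have "0 \<le> C"
      using assms(1,4) by (meson mult_nonneg_nonneg norm_ge_zero order_trans)
    then show "(w * norm p) * norm (q' - q) \<le> C * \<eta>\<^sub>2"
      using assms(4,5) by (intro mult_mono) simp_all
  qed
  finally show ?thesis .
qed

lemma schwartz_Cc_translate_bound:
  fixes \<phi> :: "'e::euclidean_space \<Rightarrow> complex" and \<psi> :: "'h::topological_ab_group_add \<Rightarrow> complex"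
  assumes "schwartz \<phi>" "Cc \<psi>" "\<epsilon> > 0"
  obtains W where "open W" "0 \<in> W"
    "\<And>a b y z. (a, b) \<in> W \<Longrightarrow> (1 + norm y) ^ N * norm (\<phi> (y - a) * \<psi> (z - b) - \<phi> y * \<psi> z) \<le> \<epsilon>"
proof -
  obtain P where "0 \<le> P" and P: "\<And>z. norm (\<psi> z) \<le> P"
    using Cc_bounded[OF assms(2)] by blast
  obtain C where "0 \<le> C" and C: "\<And>y. (1 + norm y) ^ N * norm (\<phi> y) \<le> C"
    using schwartz_decay[OF assms(1)] by blast
  define \<eta>\<^sub>1 where "\<eta>\<^sub>1 = \<epsilon> / (2 * (P + 1))"
  define \<eta>\<^sub>2 where "\<eta>\<^sub>2 = \<epsilon> / (2 * (C + 1))"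
  have "\<eta>\<^sub>1 > 0" "\<eta>\<^sub>2 > 0"
    using \<open>0 \<le> P\<close> \<open>0 \<le> C\<close> assms(3) by (simp_all add: \<eta>\<^sub>1_def \<eta>\<^sub>2_def)
  have "\<eta>\<^sub>1 * P + C * \<eta>\<^sub>2 \<le> \<epsilon> / 2 + \<epsilon> / 2"
    using \<open>0 \<le> P\<close> \<open>0 \<le> C\<close> assms(3) by (intro add_mono) (simp_all add: \<eta>\<^sub>1_def \<eta>\<^sub>2_def field_simps)
  obtain \<delta> where "\<delta> > 0" and \<delta>: "\<And>a y. norm a < \<delta> \<Longrightarrow> (1 + norm y) ^ N * norm (\<phi> (y - a) - \<phi> y) \<le> \<eta>\<^sub>1"
    using schwartz_translate_uniform[OF assms(1) \<open>\<eta>\<^sub>1 > 0\<close>] by blast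
  obtain V where "open V" "0 \<in> V" and V: "\<And>b z. b \<in> V \<Longrightarrow> norm (\<psi> (z - b) - \<psi> z) < \<eta>\<^sub>2"
    using Cc_translate_uniform[OF assms(2) \<open>\<eta>\<^sub>2 > 0\<close>] by blast
  show ?thesis
  proof (rule that[of "ball (0::'e) \<delta> \<times> V"])
    show "open (ball (0::'e) \<delta> \<times> V)" "0 \<in> ball (0::'e) \<delta> \<times> V"
      using \<open>open V\<close> \<open>0 \<in> V\<close> \<open>\<delta> > 0\<close> by (auto simp: zero_prod_def open_Times)
    fix a y :: 'e and b z :: 'h
    assume "(a, b) \<in> ball 0 \<delta> \<times> V"
    then have a: "norm a < \<delta>" and b: "b \<in> V"
      by auto
    have "(1 + norm y) ^ N * norm (\<phi> (y - a) * \<psi> (z - b) - \<phi> y * \<psi> z) \<le> \<eta>\<^sub>1 * P + C * \<eta>\<^sub>2"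
      using \<delta>[OF a, of y] P[of "z - b"] C[of y] less_imp_le[OF V[OF b, of z]]
      by (intro weighted_norm_mult_diff_le) simp_all
    then show "(1 + norm y) ^ N * norm (\<phi> (y - a) * \<psi> (z - b) - \<phi> y * \<psi> z) \<le> \<epsilon>"
      using \<open>\<eta>\<^sub>1 * P + C * \<eta>\<^sub>2 \<le> \<epsilon> / 2 + \<epsilon> / 2\<close> by simp
  qed
qed

section \<open>Counting points in Euclidean space\<close>

lemma cball_covering_double:
  fixes C0 Cs :: "'a::real_normed_vector set"
  assumes C0: "cball 0 2 \<subseteq> (\<Union>c\<in>C0. cball c 1)" and Cs: "cball 0 r \<subseteq> (\<Union>c\<in>Cs. cball c 1)"
    and "r > 0"
  shows "cball 0 (2 * r) \<subseteq> (\<Union>p\<in>C0 \<times> Cs. cball (r *\<^sub>R fst p + snd p) 1)"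
proof
  fix y :: 'a assume "y \<in> cball 0 (2 * r)"
  then have "(1 / r) *\<^sub>R y \<in> cball 0 2"
    using \<open>r > 0\<close> by (simp add: divide_le_eq mult.commute)
  then obtain c where c: "c \<in> C0" "dist c ((1 / r) *\<^sub>R y) \<le> 1"
    using C0 mem_cball by blast
  have "y - r *\<^sub>R c = r *\<^sub>R ((1 / r) *\<^sub>R y - c)"
    using \<open>r > 0\<close> by (simp add: algebra_simps)
  then have "norm (y - r *\<^sub>R c) \<le> r"
    using c(2) \<open>r > 0\<close> by (simp add: dist_norm norm_minus_commute mult_le_cancel_left1)
  then have "y - r *\<^sub>R c \<in> cball 0 r"
    by (simp add: dist_norm norm_minus_commute)
  then obtain c' where c': "c' \<in> Cs" "dist c' (y - r *\<^sub>R c) \<le> 1"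
    using Cs mem_cball by blast
  then have "y \<in> cball (r *\<^sub>R c + c') 1"
    by (simp add: dist_norm algebra_simps)
  then show "y \<in> (\<Union>p\<in>C0 \<times> Cs. cball (r *\<^sub>R fst p + snd p) 1)"
    using c(1) c'(1) by force
qed

lemma cball_pow2_covering:
  obtains A :: nat where
    "\<And>j. \<exists>Cs. finite Cs \<and> card Cs \<le> A ^ j \<and>
      cball (0::'a::{heine_borel, real_normed_vector}) (2 ^ j) \<subseteq> (\<Union>c\<in>Cs. cball c 1)"
proof -
  have "cball (0::'a) 2 \<subseteq> (\<Union>c\<in>cball 0 2. ball c 1)"
    by force
  then obtain C0 where "finite C0" "cball (0::'a) 2 \<subseteq> (\<Union>c\<in>C0. ball c 1)"
    by (rule compactE_image[OF compact_cball open_ball])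
  then have C0: "finite C0" "cball (0::'a) 2 \<subseteq> (\<Union>c\<in>C0. cball c 1)"
    using ball_subset_cball by blast+
  have "\<exists>Cs. finite Cs \<and> card Cs \<le> card C0 ^ j \<and> cball (0::'a) (2 ^ j) \<subseteq> (\<Union>c\<in>Cs. cball c 1)" for j
  proof (induction j)
    case 0
    show ?case
      by (intro exI[of _ "{0}"]) auto
  next
    case (Suc j)
    then obtain Cs where Cs: "finite Cs" "card Cs \<le> card C0 ^ j" "cball (0::'a) (2 ^ j) \<subseteq> (\<Union>c\<in>Cs. cball c 1)"
      by blast
    define D where "D = (\<lambda>p. (2 ^ j) *\<^sub>R fst p + snd p) ` (C0 \<times> Cs)"
    have "card D \<le> card (C0 \<times> Cs)"
      unfolding D_def using C0(1) Cs(1) by (intro card_image_le) simp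
    also have "\<dots> = card C0 * card Cs"
      by (rule card_cartesian_product)
    also have "\<dots> \<le> card C0 ^ Suc j"
      using Cs(2) by simp
    finally have "card D \<le> card C0 ^ Suc j" .
    moreover have "cball (0::'a) (2 ^ Suc j) \<subseteq> (\<Union>c\<in>D. cball c 1)"
      using cball_covering_double[OF C0(2) Cs(3)] by (simp add: D_def mult.commute)
    moreover have "finite D"
      using C0(1) Cs(1) by (simp add: D_def)
    ultimately show ?case
      by blast
  qed
  then show ?thesis
    by (rule that)
qed

lemma inverse_power_le_dyadic_sum:
  fixes x :: real
  assumes "0 \<le> x" "x \<le> 2 ^ J"
  shows "1 / (1 + x) ^ N \<le> (\<Sum>j\<le>J. if x \<le> 2 ^ j then 2 ^ N / (2 ^ N) ^ j else 0)"
proof -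
  define j0 where "j0 = (LEAST j. x \<le> 2 ^ j)"
  have j0: "x \<le> 2 ^ j0" "j0 \<le> J"
    unfolding j0_def using assms(2) by (auto intro: LeastI Least_le)
  have "1 / (1 + x) ^ N \<le> 2 ^ N / (2 ^ N) ^ j0"
  proof (cases j0)
    case 0
    have "1 / (1 + x) ^ N \<le> 1"
      using assms(1) by simp
    also have "(1::real) \<le> 2 ^ N"
      by simp
    finally show ?thesis
      using 0 by simp
  next
    case (Suc k)
    then have "2 ^ k < x"
      using not_less_Least[of k "\<lambda>j. x \<le> 2 ^ j"] by (simp add: j0_def)
    then have "(2 ^ k) ^ N \<le> (1 + x) ^ N"
      by (intro power_mono) simp_all
    then have "1 / (1 + x) ^ N \<le> 1 / (2 ^ k) ^ N"
      by (intro divide_left_mono) (simp_all add: add_pos_nonneg assms(1))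
    also have "\<dots> = 2 ^ N / (2 ^ N) ^ j0"
      by (simp add: Suc power_mult[symmetric] mult.commute)
    finally show ?thesis .
  qed
  also have "\<dots> = (\<lambda>j. if x \<le> 2 ^ j then 2 ^ N / (2 ^ N) ^ j else 0) j0"
    using j0(1) by simp
  also have "\<dots> \<le> (\<Sum>j\<le>J. if x \<le> 2 ^ j then 2 ^ N / (2 ^ N) ^ j else 0)"
    using j0(2) by (intro member_le_sum) auto
  finally show ?thesis .
qed

lemma geometric_sum_le_two:
  fixes q :: real
  assumes "0 \<le> q" "q \<le> 1 / 2"
  shows "(\<Sum>j<n. q ^ j) \<le> 2"
proof -
  have "(\<Sum>j<n. q ^ j) \<le> 2 - 2 * q ^ n"
  proof (induction n)
    case 0
    then show ?case by simp
  next
    case (Suc n)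
    have "2 * q ^ Suc n \<le> q ^ n"
      using assms mult_right_mono[of "2 * q" 1 "q ^ n"] by (simp add: mult.assoc)
    then show ?case
      using Suc by simp
  qed
  then show ?thesis
    using zero_le_power[OF assms(1), of n] by linarith
qed

lemma card_norm_le_of_cover:
  fixes e :: "'i \<Rightarrow> 'a::real_normed_vector" and Cs :: "'a set"
  assumes "finite F" and count: "\<And>c. card {i\<in>F. e i \<in> cball c 1} \<le> M"
    and "finite Cs" and cover: "cball 0 r \<subseteq> (\<Union>c\<in>Cs. cball c 1)"
  shows "card {i\<in>F. norm (e i) \<le> r} \<le> card Cs * M"
proof -
  have "{i\<in>F. norm (e i) \<le> r} \<subseteq> (\<Union>c\<in>Cs. {i\<in>F. e i \<in> cball c 1})"
  proof
    fix i assume "i \<in> {i\<in>F. norm (e i) \<le> r}"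
    moreover from this obtain c where "c \<in> Cs" "e i \<in> cball c 1"
      using cover by (auto simp: subset_iff)
    ultimately show "i \<in> (\<Union>c\<in>Cs. {i\<in>F. e i \<in> cball c 1})"
      by blast
  qed
  then have "card {i\<in>F. norm (e i) \<le> r} \<le> card (\<Union>c\<in>Cs. {i\<in>F. e i \<in> cball c 1})"
    using assms(1,3) by (intro card_mono) auto
  also have "\<dots> \<le> (\<Sum>c\<in>Cs. card {i\<in>F. e i \<in> cball c 1})"
    using assms(3) by (rule card_UN_le)
  also have "\<dots> \<le> card Cs * M"
    using sum_mono[of Cs _ "\<lambda>_. M"] count by simp
  finally show ?thesis .
qed

text \<open>Dyadic decomposition: with at most M points per unit ball, there are at most M A^j points
  of norm at most 2^j, so for A \<le> 2^(N-1) the weights (1 + norm x)^-N sum geometrically.\<close>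
lemma sum_inverse_power_norm_le:
  fixes e :: "'i \<Rightarrow> 'a::real_normed_vector"
  assumes cover: "\<And>j. \<exists>Cs. finite Cs \<and> card Cs \<le> A ^ j \<and> cball (0::'a) (2 ^ j) \<subseteq> (\<Union>c\<in>Cs. cball c 1)"
    and "2 * A \<le> 2 ^ N" and F: "finite F" and count: "\<And>c. card {i\<in>F. e i \<in> cball c 1} \<le> M"
  shows "(\<Sum>i\<in>F. 1 / (1 + norm (e i)) ^ N) \<le> (2 * 2 ^ N) * real M"
proof -
  define a :: "nat \<Rightarrow> real" where "a j = 2 ^ N / (2 ^ N) ^ j" for j
  have "2 * real A \<le> 2 ^ N"
    using assms(2) by (metis of_nat_le_iff of_nat_mult of_nat_numeral of_nat_power)
  then have q: "0 \<le> real A / 2 ^ N" "real A / 2 ^ N \<le> 1 / 2"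
    by (simp_all add: field_simps)
  have shell: "card {i\<in>F. norm (e i) \<le> 2 ^ j} \<le> M * A ^ j" for j
  proof -
    obtain Cs where Cs: "finite Cs" "card Cs \<le> A ^ j" "cball (0::'a) (2 ^ j) \<subseteq> (\<Union>c\<in>Cs. cball c 1)"
      using cover by blast
    have "card {i\<in>F. norm (e i) \<le> 2 ^ j} \<le> card Cs * M"
      using Cs(1,3) by (rule card_norm_le_of_cover[OF F count])
    also have "\<dots> \<le> A ^ j * M"
      using Cs(2) by simp
    finally show ?thesis
      by (simp add: mult.commute)
  qed
  obtain R where R: "\<And>i. i \<in> F \<Longrightarrow> norm (e i) \<le> R"
    using finite_imp_bounded[of "e ` F"] F by (auto simp: bounded_iff)
  obtain J where "R < 2 ^ J"
    using real_arch_pow[of 2 R] by auto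
  then have J: "norm (e i) \<le> 2 ^ J" if "i \<in> F" for i
    using R[OF that] by linarith
  have "(\<Sum>i\<in>F. 1 / (1 + norm (e i)) ^ N) \<le> (\<Sum>i\<in>F. \<Sum>j\<le>J. if norm (e i) \<le> 2 ^ j then a j else 0)"
    unfolding a_def using J by (intro sum_mono inverse_power_le_dyadic_sum) simp_all
  also have "\<dots> = (\<Sum>j\<le>J. a j * card {i\<in>F. norm (e i) \<le> 2 ^ j})"
    using F by (subst sum.swap) (simp add: sum.If_cases Int_def mult.commute)
  also have "\<dots> \<le> (\<Sum>j\<le>J. a j * (M * A ^ j))"
    using shell[THEN of_nat_mono[where 'a=real]] by (intro sum_mono mult_left_mono) (simp_all add: a_def)
  also have "\<dots> = 2 ^ N * real M * (\<Sum>j<Suc J. (real A / 2 ^ N) ^ j)"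
    by (simp add: a_def sum_distrib_left lessThan_Suc_atMost power_divide mult.assoc)
  also have "\<dots> \<le> 2 ^ N * real M * 2"
    using q by (intro mult_left_mono geometric_sum_le_two) simp_all
  finally show ?thesis
    by simp
qed

lemma sum_inverse_power_norm_bounded:
  obtains B :: real and N :: nat where "0 \<le> B"
    "\<And>F (e :: 'i \<Rightarrow> 'a::{heine_borel, real_normed_vector}) M. finite F \<Longrightarrow>
      (\<And>c. card {i\<in>F. e i \<in> cball c 1} \<le> M) \<Longrightarrow> (\<Sum>i\<in>F. 1 / (1 + norm (e i)) ^ N) \<le> B * M"
proof -
  obtain A :: nat where A:
    "\<And>j. \<exists>Cs. finite Cs \<and> card Cs \<le> A ^ j \<and> cball (0::'a) (2 ^ j) \<subseteq> (\<Union>c\<in>Cs. cball c 1)"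
    using cball_pow2_covering by blast
  have A2: "2 * A \<le> 2 ^ (A + 1)"
    using less_exp[of A] by simp
  show ?thesis
  proof (rule that[where N = "A + 1" and B = "2 * 2 ^ (A + 1)"])
    show "(0::real) \<le> 2 * 2 ^ (A + 1)"
      by simp
    fix F and e :: "'i \<Rightarrow> 'a" and M
    assume "finite F" "\<And>c. card {i\<in>F. e i \<in> cball c 1} \<le> M"
    then show "(\<Sum>i\<in>F. 1 / (1 + norm (e i)) ^ (A + 1)) \<le> 2 * 2 ^ (A + 1) * real M"
      by (rule sum_inverse_power_norm_le[OF A A2])
  qed
qed

section \<open>Weighted Dirac combs of cut and project schemes\<close>

lemma cut_and_projectD:
  assumes "cut_and_project L"
  shows "0 \<in> L" "\<And>x y. x \<in> L \<Longrightarrow> y \<in> L \<Longrightarrow> x - y \<in> L" "\<And>x y. x \<in> L \<Longrightarrow> y \<in> L \<Longrightarrow> x + y \<in> L"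
    "inj_on fst L"
proof -
  show "0 \<in> L" and diff: "\<And>x y. x \<in> L \<Longrightarrow> y \<in> L \<Longrightarrow> x - y \<in> L" and "inj_on fst L"
    using assms by (simp_all add: cut_and_project_def)
  show "x + y \<in> L" if "x \<in> L" "y \<in> L" for x y
    using diff[OF that(1) diff[OF \<open>0 \<in> L\<close> that(2)]] by simp
qed

lemma star_map_fst:
  assumes "inj_on fst L" "l \<in> L"
  shows "star_map L (fst l) = snd l"
  unfolding star_map_def
proof (rule the_equality)
  show "(fst l, snd l) \<in> L"
    using assms(2) by simp
  fix y assume "(fst l, y) \<in> L"
  then have "(fst l, y) = l"
    using inj_onD[OF assms(1), of "(fst l, y)" l] assms(2) by simp
  then show "y = snd l"
    by (metis snd_conv)
qed

lemma omega_fst: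
  assumes "inj_on fst L" "l \<in> L"
  shows "omega L h (fst l) = h (snd l)"
  using assms by (simp add: omega_def star_map_fst)

lemma omega_translate_lattice:
  fixes L :: "('g::ab_group_add \<times> 'k::ab_group_add) set"
  assumes diff: "\<And>x y. x \<in> L \<Longrightarrow> y \<in> L \<Longrightarrow> x - y \<in> L" and add: "\<And>x y. x \<in> L \<Longrightarrow> y \<in> L \<Longrightarrow> x + y \<in> L"
    and inj: "inj_on fst L" and "l \<in> L"
  shows "(\<lambda>y. pp_translate (fst l) (omega L h) y - omega L h y) = omega L (\<lambda>w. h (w - snd l) - h w)"
proof
  fix y
  show "pp_translate (fst l) (omega L h) y - omega L h y = omega L (\<lambda>w. h (w - snd l) - h w) y"
  proof (cases "y \<in> fst ` L")
    case True
    then obtain m where m: "m \<in> L" "y = fst m"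
      by auto
    have "omega L h (fst (m - l)) = h (snd (m - l))"
      using diff[OF m(1) \<open>l \<in> L\<close>] by (rule omega_fst[OF inj])
    then show ?thesis
      using m by (simp add: pp_translate_def omega_fst[OF inj])
  next
    case False
    have "y - fst l \<notin> fst ` L"
    proof
      assume "y - fst l \<in> fst ` L"
      then obtain m where "m \<in> L" "y = fst (m + l)"
        by (auto simp: algebra_simps)
      then have "y \<in> fst ` L"
        using add[OF \<open>m \<in> L\<close> \<open>l \<in> L\<close>] by blast
      then show False
        using False by simp
    qed
    then show ?thesis
      using False by (simp add: pp_translate_def omega_def)
  qed
qed

lemma sum_norm_omega:
  assumes inj: "inj_on fst L" and "finite F"
  shows "(\<Sum>x\<in>F. norm (omega L g x)) = (\<Sum>l\<in>{l\<in>L. fst l \<in> F}. norm (g (snd l)))"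
proof -
  have "fst ` {l\<in>L. fst l \<in> F} = F \<inter> fst ` L"
    by auto
  then have "(\<Sum>x\<in>F. norm (omega L g x)) = (\<Sum>x\<in>fst ` {l\<in>L. fst l \<in> F}. norm (omega L g x))"
    using \<open>finite F\<close> by (intro sum.mono_neutral_right) (auto simp: omega_def)
  also have "\<dots> = (\<Sum>l\<in>{l\<in>L. fst l \<in> F}. norm (omega L g (fst l)))"
    using inj_on_subset[OF inj, of "{l\<in>L. fst l \<in> F}"] by (simp add: sum.reindex)
  also have "\<dots> = (\<Sum>l\<in>{l\<in>L. fst l \<in> F}. norm (g (snd l)))"
    using inj by (intro sum.cong) (simp_all add: omega_fst)
  finally show ?thesis .
qed

lemma pp_Knorm_le_finite_sums:
  assumes "\<And>s F. finite F \<Longrightarrow> F \<subseteq> (\<lambda>k. s + k) ` K \<Longrightarrow> (\<Sum>x\<in>F. norm (c x)) \<le> r"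
  shows "pp_Knorm K c \<le> ennreal r"
  unfolding pp_Knorm_def pp_variation_def
proof (rule SUP_least, rule infsum_le_finite_sums)
  fix s
  show "(\<lambda>x. ennreal (norm (c x))) summable_on (\<lambda>k. s + k) ` K"
    by (rule nonneg_summable_on_complete) simp
  fix F assume "finite F" "F \<subseteq> (\<lambda>k. s + k) ` K"
  then have "(\<Sum>x\<in>F. norm (c x)) \<le> r"
    by (rule assms)
  then show "(\<Sum>x\<in>F. ennreal (norm (c x))) \<le> ennreal r"
    by (simp add: sum_ennreal ennreal_leI)
qed

lemma relatively_dense_mono:
  assumes "relatively_dense P" "P \<subseteq> P'"
  shows "relatively_dense P'"
proof -
  obtain C where C: "compact C" "(\<Union>p\<in>P. (+) p ` C) = UNIV"
    using assms(1) unfolding relatively_dense_def by blast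
  have "(\<Union>p\<in>P. (+) p ` C) \<subseteq> (\<Union>p\<in>P'. (+) p ` C)"
    by (rule UN_mono[OF assms(2) order_refl])
  then have "(\<Union>p\<in>P'. (+) p ` C) = UNIV"
    using C(2) by (simp add: top.extremum_unique)
  then show ?thesis
    unfolding relatively_dense_def by (intro exI[of _ C] conjI C(1))
qed

lemma dense_projection_finite_cover:
  fixes L :: "('g \<times> 'k::topological_ab_group_add) set"
  assumes dense: "closure (snd ` L) = UNIV" and W: "open W" "W \<noteq> {}" and "compact T"
  obtains Lf where "Lf \<subseteq> L" "finite Lf" "\<And>w. w \<in> T \<Longrightarrow> \<exists>l\<in>Lf. snd l - w \<in> W"
proof -
  define Nb where "Nb l = (\<lambda>w. snd l - w) -` W" for l :: "'g \<times> 'k"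
  have open_Nb: "open (Nb l)" for l
    unfolding Nb_def using W(1) by (intro open_vimage continuous_intros)
  have cover: "T \<subseteq> (\<Union>l\<in>L. Nb l)"
  proof
    fix w
    have "open ((+) w ` W)" "(+) w ` W \<noteq> {}"
      using W by (auto intro: open_translation_group)
    then have "(+) w ` W \<inter> snd ` L \<noteq> {}"
      using open_Int_closure_eq_empty[of "(+) w ` W" "snd ` L"] dense by auto
    then obtain z where "z \<in> (+) w ` W" "z \<in> snd ` L"
      by blast
    then obtain l v where "l \<in> L" "v \<in> W" "snd l = w + v"
      by (metis imageE)
    then have "w \<in> Nb l"
      by (simp add: Nb_def algebra_simps)
    with \<open>l \<in> L\<close> show "w \<in> (\<Union>l\<in>L. Nb l)"
      by blast
  qed
  obtain Lf where Lf: "Lf \<subseteq> L" "finite Lf" "T \<subseteq> (\<Union>l\<in>Lf. Nb l)"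
    using \<open>compact T\<close> open_Nb cover by (rule compactE_image)
  show ?thesis
  proof (rule that[OF Lf(1,2)])
    fix w assume "w \<in> T"
    then show "\<exists>l\<in>Lf. snd l - w \<in> W"
      using Lf(3) by (auto simp: Nb_def)
  qed
qed

text \<open>If L + C = G \<times> H with C compact, then x + 0 = l + c; choosing one of finitely many l' with
  snd l' - snd c in W puts x within fst c - fst l' of the model set point fst (l + l').\<close>
lemma relatively_dense_model_set:
  fixes L :: "('g::topological_ab_group_add \<times> 'k::topological_ab_group_add) set"
  assumes cp: "cut_and_project L" and W: "open W" "0 \<in> W"
  shows "relatively_dense {fst l | l. l \<in> L \<and> snd l \<in> W}"
proof -
  obtain C where C: "compact C" "(\<Union>l\<in>L. (\<lambda>c. l + c) ` C) = UNIV"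
    using cp unfolding cut_and_project_def by auto
  have dense: "closure (snd ` L) = UNIV"
    using cp unfolding cut_and_project_def by simp
  have "compact (snd ` C)"
    using C(1) by (intro compact_continuous_image continuous_intros)
  moreover have "W \<noteq> {}"
    using W(2) by blast
  ultimately obtain Lf where Lf: "Lf \<subseteq> L" "finite Lf" "\<And>w. w \<in> snd ` C \<Longrightarrow> \<exists>l\<in>Lf. snd l - w \<in> W"
    using dense_projection_finite_cover[OF dense W(1)] by blast
  define C' where "C' = (\<Union>l'\<in>Lf. (\<lambda>c. fst c - fst l') ` C)"
  have "compact C'"
    unfolding C'_def using Lf(2) C(1)
    by (intro compact_UN compact_continuous_image continuous_intros) auto
  have "x \<in> (\<Union>p\<in>{fst l | l. l \<in> L \<and> snd l \<in> W}. (+) p ` C')" for x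
  proof -
    have "(x, 0) \<in> (\<Union>l\<in>L. (\<lambda>c. l + c) ` C)"
      using C(2) by simp
    then obtain l c where lc: "l \<in> L" "c \<in> C" "(x, 0) = l + c"
      by blast
    then obtain l' where l': "l' \<in> Lf" "snd l' - snd c \<in> W"
      using Lf(3) by blast
    have "snd l + snd c = 0"
      using lc(3) by (simp add: prod_eq_iff)
    then have "snd (l + l') = snd l' - snd c"
      by (simp add: eq_neg_iff_add_eq_0[symmetric])
    then have "snd (l + l') \<in> W"
      using l'(2) by simp
    moreover have "l + l' \<in> L"
      using cut_and_projectD(3)[OF cp lc(1)] l'(1) Lf(1) by blast
    ultimately have "fst (l + l') \<in> {fst l | l. l \<in> L \<and> snd l \<in> W}"
      by (intro CollectI exI[of _ "l + l'"]) simp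
    moreover have "x = fst (l + l') + (fst c - fst l')"
      using lc(3) by (simp add: prod_eq_iff algebra_simps)
    moreover have "fst c - fst l' \<in> C'"
      using l'(1) lc(2) by (auto simp: C'_def)
    ultimately show ?thesis
      by (intro UN_I image_eqI)
  qed
  then have "(\<Union>p\<in>{fst l | l. l \<in> L \<and> snd l \<in> W}. (+) p ` C') = UNIV"
    by (intro UNIV_eq_I[symmetric])
  then show ?thesis
    unfolding relatively_dense_def by (intro exI[of _ C'] conjI \<open>compact C'\<close>)
qed

lemma lattice_count_bounded:
  fixes L :: "('g::topological_ab_group_add \<times> ('a::{heine_borel, real_normed_vector} \<times> 'h::topological_ab_group_add)) set"
  assumes cp: "cut_and_project L" and "compact K" "compact S"
  obtains M where
    "\<And>s c. finite {l\<in>L. fst l \<in> (+) s ` K \<and> fst (snd l) \<in> cball c 1 \<and> snd (snd l) \<in> S}"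
    "\<And>s c. card {l\<in>L. fst l \<in> (+) s ` K \<and> fst (snd l) \<in> cball c 1 \<and> snd (snd l) \<in> S} \<le> M"
proof -
  define Q where "Q = K \<times> (cball (0::'a) 1 \<times> S)"
  have "compact Q"
    unfolding Q_def using assms(2,3) by (intro compact_Times compact_cball)
  have "\<exists>U. open U \<and> 0 \<in> U \<and> L \<inter> U = {0}"
    using cp by (simp add: cut_and_project_def)
  then obtain U where U: "open U" "0 \<in> U" "L \<inter> U = {0}"
    by blast
  obtain M where M: "\<And>x. finite (L \<inter> (+) x ` Q)" "\<And>x. card (L \<inter> (+) x ` Q) \<le> M"
    using uniformly_discrete_card_bounded[OF cut_and_projectD(2)[OF cp] U \<open>compact Q\<close>] by blast
  have sub: "{l\<in>L. fst l \<in> (+) s ` K \<and> fst (snd l) \<in> cball c 1 \<and> snd (snd l) \<in> S} \<subseteq> L \<inter> (+) (s, c, 0) ` Q"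
    for s c
  proof
    fix l assume l: "l \<in> {l\<in>L. fst l \<in> (+) s ` K \<and> fst (snd l) \<in> cball c 1 \<and> snd (snd l) \<in> S}"
    then obtain k where k: "k \<in> K" "fst l = s + k"
      by auto
    have "norm (fst (snd l) - c) \<le> 1"
      using l by (simp add: dist_norm norm_minus_commute)
    then have "(k, fst (snd l) - c, snd (snd l)) \<in> Q"
      using k(1) l by (simp add: Q_def)
    moreover have "l = (s, c, 0) + (k, fst (snd l) - c, snd (snd l))"
      using k(2) by (simp add: prod_eq_iff)
    ultimately have "l \<in> (+) (s, c, 0) ` Q"
      by (intro image_eqI)
    then show "l \<in> L \<inter> (+) (s, c, 0) ` Q"
      using l by simp
  qed
  show ?thesis
  proof (rule that)
    fix s c
    show "finite {l\<in>L. fst l \<in> (+) s ` K \<and> fst (snd l) \<in> cball c 1 \<and> snd (snd l) \<in> S}"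
      using sub M(1) by (rule finite_subset)
    show "card {l\<in>L. fst l \<in> (+) s ` K \<and> fst (snd l) \<in> cball c 1 \<and> snd (snd l) \<in> S} \<le> M"
      using card_mono[OF M(1) sub] M(2) by (rule order_trans)
  qed
qed

lemma sum_norm_le_decay_weights:
  fixes g :: "'a::real_normed_vector \<times> 'h \<Rightarrow> 'b::real_normed_vector" and p :: "'i \<Rightarrow> 'a \<times> 'h"
  assumes "finite X" and decay: "\<And>y z. (1 + norm y) ^ N * norm (g (y, z)) \<le> \<beta>"
    and supp: "\<And>y z. z \<notin> S \<Longrightarrow> g (y, z) = 0"
  shows "(\<Sum>i\<in>X. norm (g (p i))) \<le> \<beta> * (\<Sum>i\<in>{i\<in>X. snd (p i) \<in> S}. 1 / (1 + norm (fst (p i))) ^ N)"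
proof -
  have "(\<Sum>i\<in>X. norm (g (p i))) = (\<Sum>i\<in>{i\<in>X. snd (p i) \<in> S}. norm (g (p i)))"
  proof (rule sum.mono_neutral_right[OF \<open>finite X\<close>])
    show "\<forall>i\<in>X - {i\<in>X. snd (p i) \<in> S}. norm (g (p i)) = 0"
    proof
      fix i assume "i \<in> X - {i\<in>X. snd (p i) \<in> S}"
      then show "norm (g (p i)) = 0"
        using supp[of "snd (p i)" "fst (p i)"] by simp
    qed
  qed auto
  also have "\<dots> \<le> (\<Sum>i\<in>{i\<in>X. snd (p i) \<in> S}. \<beta> * (1 / (1 + norm (fst (p i))) ^ N))"
  proof (rule sum_mono)
    fix i
    have "(1 + norm (fst (p i))) ^ N * norm (g (p i)) \<le> \<beta>"
      using decay[of "fst (p i)" "snd (p i)"] by simp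
    then show "norm (g (p i)) \<le> \<beta> * (1 / (1 + norm (fst (p i))) ^ N)"
      by (simp add: pos_le_divide_eq mult.commute add_pos_nonneg)
  qed
  also have "\<dots> = \<beta> * (\<Sum>i\<in>{i\<in>X. snd (p i) \<in> S}. 1 / (1 + norm (fst (p i))) ^ N)"
    by (simp add: sum_distrib_left)
  finally show ?thesis .
qed

lemma pp_Knorm_omega_le:
  fixes L :: "('g::ab_group_add \<times> ('a::real_normed_vector \<times> 'h)) set" and B :: real
  assumes inj: "inj_on fst L"
    and count: "\<And>s c. finite {l\<in>L. fst l \<in> (+) s ` K \<and> fst (snd l) \<in> cball c 1 \<and> snd (snd l) \<in> S}"
      "\<And>s c. card {l\<in>L. fst l \<in> (+) s ` K \<and> fst (snd l) \<in> cball c 1 \<and> snd (snd l) \<in> S} \<le> M"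
    and sum_le: "\<And>F (e :: 'g \<times> 'a \<times> 'h \<Rightarrow> 'a). finite F \<Longrightarrow>
      (\<And>c. card {i\<in>F. e i \<in> cball c 1} \<le> M) \<Longrightarrow> (\<Sum>i\<in>F. 1 / (1 + norm (e i)) ^ N) \<le> B * M"
    and decay: "\<And>y z. (1 + norm y) ^ N * norm (g (y, z)) \<le> \<beta>"
    and supp: "\<And>y z. z \<notin> S \<Longrightarrow> g (y, z) = 0"
  shows "pp_Knorm K (omega L g) \<le> ennreal (\<beta> * (B * M))"
proof (rule pp_Knorm_le_finite_sums)
  fix s F assume F: "finite F" "F \<subseteq> (+) s ` K"
  define E where "E = {l\<in>{l\<in>L. fst l \<in> F}. snd (snd l) \<in> S}"
  have "0 \<le> (1 + norm y) ^ N * norm (g (y, z))" for y z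
    by simp
  then have "0 \<le> \<beta>"
    using decay order_trans by blast
  have "{l\<in>L. fst l \<in> F} = fst -` F \<inter> L"
    by blast
  then have fin: "finite {l\<in>L. fst l \<in> F}"
    using finite_vimage_IntI[OF F(1) inj] by simp
  have "(\<Sum>x\<in>F. norm (omega L g x)) = (\<Sum>l\<in>{l\<in>L. fst l \<in> F}. norm (g (snd l)))"
    by (rule sum_norm_omega[OF inj F(1)])
  also have "\<dots> \<le> \<beta> * (\<Sum>l\<in>E. 1 / (1 + norm (fst (snd l))) ^ N)"
    unfolding E_def using fin decay supp by (rule sum_norm_le_decay_weights)
  also have "\<dots> \<le> \<beta> * (B * M)"
  proof (rule mult_left_mono[OF sum_le \<open>0 \<le> \<beta>\<close>])
    show "finite E"
      using fin by (rule finite_subset[rotated]) (auto simp: E_def)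
    fix c
    have "{l\<in>E. fst (snd l) \<in> cball c 1} \<subseteq>
        {l\<in>L. fst l \<in> (+) s ` K \<and> fst (snd l) \<in> cball c 1 \<and> snd (snd l) \<in> S}"
      using F(2) by (auto simp: E_def)
    then have "card {l\<in>E. fst (snd l) \<in> cball c 1} \<le>
        card {l\<in>L. fst l \<in> (+) s ` K \<and> fst (snd l) \<in> cball c 1 \<and> snd (snd l) \<in> S}"
      by (rule card_mono[OF count(1)])
    also have "\<dots> \<le> M"
      by (rule count(2))
    finally show "card {l\<in>E. fst (snd l) \<in> cball c 1} \<le> M" .
  qed
  finally show "(\<Sum>x\<in>F. norm (omega L g x)) \<le> \<beta> * (B * M)" .
qed

text \<open>Every window s + K contains boundedly many lattice points over each unit ball of the
  Euclidean internal coordinate, which makes the decaying weights summable uniformly in s.\<close>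
lemma pp_Knorm_omega_decay_bounded:
  fixes L :: "('g::topological_ab_group_add \<times>
               ('a::{heine_borel, real_normed_vector} \<times> 'h::topological_ab_group_add)) set"
  assumes cp: "cut_and_project L" and "compact K" "compact S"
  obtains B N where "0 \<le> B"
    "\<And>g \<beta>. (\<And>y z. (1 + norm y) ^ N * norm (g (y, z)) \<le> \<beta>) \<Longrightarrow> (\<And>y z. z \<notin> S \<Longrightarrow> g (y, z) = 0) \<Longrightarrow>
      pp_Knorm K (omega L g) \<le> ennreal (\<beta> * B)"
proof -
  obtain M where M:
    "\<And>s c. finite {l\<in>L. fst l \<in> (+) s ` K \<and> fst (snd l) \<in> cball c 1 \<and> snd (snd l) \<in> S}"
    "\<And>s c. card {l\<in>L. fst l \<in> (+) s ` K \<and> fst (snd l) \<in> cball c 1 \<and> snd (snd l) \<in> S} \<le> M"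
    using lattice_count_bounded[OF assms] by blast
  obtain B :: real and N :: nat where "0 \<le> B" and NB: "\<And>F (e :: 'g \<times> 'a \<times> 'h \<Rightarrow> 'a) M. finite F \<Longrightarrow>
      (\<And>c. card {i\<in>F. e i \<in> cball c 1} \<le> M) \<Longrightarrow> (\<Sum>i\<in>F. 1 / (1 + norm (e i)) ^ N) \<le> B * M"
    using sum_inverse_power_norm_bounded[where 'i = "'g \<times> 'a \<times> 'h" and 'a = 'a] by blast
  show ?thesis
    using \<open>0 \<le> B\<close> pp_Knorm_omega_le[OF cut_and_projectD(4)[OF cp] M NB[of _ _ M]]
    by (intro that[where N = N and B = "B * M"]) simp_all
qed

lemma omega_tensor_almost_periods:
  fixes L :: "('g::topological_ab_group_add \<times> ('e::euclidean_space \<times> 'h::topological_ab_group_add)) set"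
    and \<phi> :: "'e \<Rightarrow> complex" and \<psi> :: "'h \<Rightarrow> complex"
  assumes cp: "cut_and_project L" and "locally compact (UNIV :: 'h set)"
    and "schwartz \<phi>" "Cc \<psi>" "compact K" "\<epsilon> > 0"
  obtains W where "open W" "0 \<in> W"
    "\<And>l. l \<in> L \<Longrightarrow> snd l \<in> W \<Longrightarrow>
      pp_Knorm K (\<lambda>x. pp_translate (fst l) (omega L (\<lambda>(y, z). \<phi> y * \<psi> z)) x
        - omega L (\<lambda>(y, z). \<phi> y * \<psi> z) x) < ennreal \<epsilon>"
proof -
  define h where "h = (\<lambda>(y, z). \<phi> y * \<psi> z)"
  obtain U S where U: "open U" "0 \<in> U" "compact S"
    and vanish: "\<And>b z. b \<in> U \<Longrightarrow> z \<notin> S \<Longrightarrow> \<psi> (z - b) = 0 \<and> \<psi> z = 0"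
    using Cc_translate_support[OF assms(4,2)] by blast
  obtain B N where "0 \<le> B" and NB: "\<And>g \<beta>. (\<And>y z. (1 + norm y) ^ N * norm (g (y, z)) \<le> \<beta>) \<Longrightarrow>
      (\<And>y z. z \<notin> S \<Longrightarrow> g (y, z) = 0) \<Longrightarrow> pp_Knorm K (omega L g) \<le> ennreal (\<beta> * B)"
    using pp_Knorm_omega_decay_bounded[OF cp \<open>compact K\<close> \<open>compact S\<close>] by blast
  define \<eta> where "\<eta> = \<epsilon> / (2 * (B + 1))"
  have "\<eta> > 0"
    using \<open>0 \<le> B\<close> \<open>\<epsilon> > 0\<close> by (simp add: \<eta>_def)
  have "\<eta> * B < \<epsilon>"
    using \<open>0 \<le> B\<close> \<open>\<epsilon> > 0\<close> by (simp add: \<eta>_def pos_divide_less_eq)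
  obtain W where W: "open W" "0 \<in> W" "\<And>a b y z. (a, b) \<in> W \<Longrightarrow>
      (1 + norm y) ^ N * norm (\<phi> (y - a) * \<psi> (z - b) - \<phi> y * \<psi> z) \<le> \<eta>"
    using schwartz_Cc_translate_bound[OF assms(3,4) \<open>\<eta> > 0\<close>] by blast
  show ?thesis
  proof (rule that[of "W \<inter> UNIV \<times> U"])
    show "open (W \<inter> UNIV \<times> U)" "0 \<in> W \<inter> UNIV \<times> U"
      using W(1,2) U(1,2) by (auto simp: zero_prod_def intro: open_Int open_Times)
    fix l assume l: "l \<in> L" "snd l \<in> W \<inter> UNIV \<times> U"
    obtain a b where ab: "snd l = (a, b)"
      by (metis surj_pair)
    have "pp_Knorm K (\<lambda>x. pp_translate (fst l) (omega L h) x - omega L h x)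
        = pp_Knorm K (omega L (\<lambda>w. h (w - (a, b)) - h w))"
      using omega_translate_lattice[OF cut_and_projectD(2-4)[OF cp] l(1)] ab by simp
    also have "\<dots> \<le> ennreal (\<eta> * B)"
    proof (rule NB)
      fix y z
      show "(1 + norm y) ^ N * norm (h ((y, z) - (a, b)) - h (y, z)) \<le> \<eta>"
        using W(3)[of a b y z] l(2) ab by (simp add: h_def)
      show "h ((y, z) - (a, b)) - h (y, z) = 0" if "z \<notin> S"
        using vanish[of b z] l(2) ab that by (simp add: h_def)
    qed
    also have "\<dots> < ennreal \<epsilon>"
      using \<open>\<eta> * B < \<epsilon>\<close> \<open>\<epsilon> > 0\<close> by (simp add: ennreal_lessI)
    finally show "pp_Knorm K (\<lambda>x. pp_translate (fst l) (omega L (\<lambda>(y, z). \<phi> y * \<psi> z)) x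
        - omega L (\<lambda>(y, z). \<phi> y * \<psi> z) x) < ennreal \<epsilon>"
      by (simp only: h_def)
  qed
qed

theorem lemma5p3:
  fixes L :: "('g::{topological_ab_group_add, t2_space} \<times>
               ('e::euclidean_space \<times> 'h::{topological_ab_group_add, t2_space})) set"
    and \<phi> :: "'e \<Rightarrow> complex" and \<psi> :: "'h \<Rightarrow> complex"
  assumes "locally compact (UNIV :: 'g set)"
    and "locally compact (UNIV :: 'h set)"
    and "cut_and_project L"
    and "schwartz \<phi>"
    and "Cc \<psi>"
  shows "norm_almost_periodic (omega L (\<lambda>(y, z). \<phi> y * \<psi> z))"
  unfolding norm_almost_periodic_def
proof (intro allI impI)
  fix K :: "'g set" and \<epsilon> :: real
  assume K: "compact K \<and> interior K \<noteq> {}" and "\<epsilon> > 0"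
  obtain W where W: "open W" "0 \<in> W"
    "\<And>l. l \<in> L \<Longrightarrow> snd l \<in> W \<Longrightarrow>
      pp_Knorm K (\<lambda>x. pp_translate (fst l) (omega L (\<lambda>(y, z). \<phi> y * \<psi> z)) x
        - omega L (\<lambda>(y, z). \<phi> y * \<psi> z) x) < ennreal \<epsilon>"
    using omega_tensor_almost_periods[OF assms(3,2,4,5) conjunct1[OF K] \<open>\<epsilon> > 0\<close>] by blast
  have "relatively_dense {fst l | l. l \<in> L \<and> snd l \<in> W}"
    using assms(3) W(1,2) by (rule relatively_dense_model_set)
  moreover have "{fst l | l. l \<in> L \<and> snd l \<in> W} \<subseteq>
      {t. pp_Knorm K (\<lambda>x. pp_translate t (omega L (\<lambda>(y, z). \<phi> y * \<psi> z)) x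
        - omega L (\<lambda>(y, z). \<phi> y * \<psi> z) x) < ennreal \<epsilon>}"
    using W(3) by blast
  ultimately show "relatively_dense {t. pp_Knorm K (\<lambda>y. pp_translate t (omega L (\<lambda>(y, z). \<phi> y * \<psi> z)) y
      - omega L (\<lambda>(y, z). \<phi> y * \<psi> z) y) < ennreal \<epsilon>}"
    by (rule relatively_dense_mono)
qed

end
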